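(* Let $q$ be a prime power and use the setting of the context. Then $\mathcal C=\bigcup_{i=0}^{q^2+q}\mathcal G_i$ is a $(6,(q^3-1)(q^2+q+1),4;3)_q$ constant-dimension subspace code; that is, it consists of $(q^3-1)(q^2+q+1)$ planes of ${\rm PG}(5,q)$, any two distinct of which meet in at most one point.
   Context: In ${\rm PG}(5,q)$ points are row vectors ${\bf X}=(X_1,\dots,X_6)$; write $X=(X_1,X_2,X_3)$, $Y=(X_4,X_5,X_6)$. Let $\pi_1$ be the plane $X_1=X_2=X_3=0$ and $\pi_2$ the plane $X_4=X_5=X_6=0$. Let $A$ be a Singer cycle of ${\rm GL}(3,q)$, i.e. a $3\times3$ matrix over ${\rm GF}(q)$ of multiplicative order $q^3-1$. For $0\le i\le q^2+q$ let $\mathcal Q_i$ be the quadric of ${\rm PG}(5,q)$ with quadratic form ${\bf Q}_i({\bf X})=XA^iY^T$; each $\mathcal Q_i$ is a non-degenerate hyperbolic quadric $\mathcal Q^+(5,q)$ containing $\pi_1$ and $\pi_2$, and the $\mathcal Q_i$ are pairwise distinct. The planes on $\mathcal Q^+(5,q)$ fall into two classes of size $(q+1)(q^2+1)$ (two planes of the same class meet in exactly one point; planes of different classes are disjoint or meet in a line); since $\pi_1\cap\pi_2=\emptyset$, $\pi_1$ and $\pi_2$ lie in different classes. Let $\mathcal G_i$ be the set of the $q^3-1$ planes of $\mathcal Q_i$ belonging to the same class as $\pi_1$, distinct from $\pi_1$ and disjoint from $\pi_2$. An $(n,M,4;3)_q$ constant-dimension code is a set of $M$ planes of ${\rm PG}(n-1,q)$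 pairwise meeting in at most a point. *)

theory Defs
  imports "HOL-Analysis.Analysis" "HOL-Library.Numeral_Type"
begin

text \<open>Coordinates X_1..X_6 are the indices 0..5 of type 6. Projective subspaces of
 PG(5,q) are identified with vector subspaces of GF(q)^6; a plane of PG(5,q)
 is a 3-dimensional subspace, a point a 1-dimensional one.\<close>

primrec matpow :: "('a::semiring_1)^'n^'n \<Rightarrow> nat \<Rightarrow> 'a^'n^'n" where
  "matpow A 0 = mat 1"
| "matpow A (Suc k) = A ** matpow A k"

definition singer_cycle :: "('a::{field,finite})^3^3 \<Rightarrow> bool" where
  "singer_cycle A \<longleftrightarrow> invertible A \<and>
     matpow A (CARD('a)^3 - 1) = mat 1 \<and>
     (\<forall>k. 0 < k \<and> k < CARD('a)^3 - 1 \<longrightarrow> matpow A k \<noteq> mat 1)"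

definition idxX :: "3 \<Rightarrow> 6" where
  "idxX j = (if j = 0 then 0 else if j = 1 then 1 else 2)"

definition idxY :: "3 \<Rightarrow> 6" where
  "idxY j = (if j = 0 then 3 else if j = 1 then 4 else 5)"

definition vecX :: "'a^6 \<Rightarrow> 'a^3" where "vecX v = (\<chi> j. v $ idxX j)"
definition vecY :: "'a^6 \<Rightarrow> 'a^3" where "vecY v = (\<chi> j. v $ idxY j)"

definition quadform :: "('a::field)^3^3 \<Rightarrow> nat \<Rightarrow> 'a^6 \<Rightarrow> 'a" where
  "quadform A i v = (\<Sum>j\<in>UNIV. vecX v $ j * (matpow A i *v vecY v) $ j)"

definition pg_plane :: "(('a::field)^6) set \<Rightarrow> bool" where
  "pg_plane W \<longleftrightarrow> vec.subspace W \<and> vec.dim W = 3"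

definition pi1 :: "(('a::field)^6) set" where "pi1 = {v. vecX v = 0}"
definition pi2 :: "(('a::field)^6) set" where "pi2 = {v. vecY v = 0}"

definition quadric_planes :: "('a::field)^3^3 \<Rightarrow> nat \<Rightarrow> ('a^6) set set" where
  "quadric_planes A i = {W. pg_plane W \<and> (\<forall>v\<in>W. quadform A i v = 0)}"

text \<open>Two planes of Q^+(5,q) are in the same class iff they meet in a point or
 coincide (vector dimension of the intersection 1 or 3), and in different classes
 iff they are disjoint or meet in a line (dimension 0 or 2).\<close>
definition same_class :: "(('a::field)^6) set \<Rightarrow> ('a^6) set \<Rightarrow> bool" where
  "same_class U W \<longleftrightarrow> vec.dim (U \<inter> W) = 1 \<or> vec.dim (U \<inter> W) = 3"

definition G :: "('a::field)^3^3 \<Rightarrow> nat \<Rightarrow> ('a^6) set set" where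
  "G A i = {W \<in> quadric_planes A i. same_class W pi1 \<and> W \<noteq> pi1 \<and> W \<inter> pi2 = {0}}"

end

theory Submission
  imports Defs
begin

(* A plane of PG(5,q) disjoint from pi_2 is the graph X = M Y of a unique 3x3 matrix M, and it
   lies on Q_i iff X A^i Y^T = Y M^T A^i Y^T vanishes identically, i.e. iff M^T A^i is the
   alternating matrix of the cross product with some x in GF(q)^3.  Its intersection with
   pi_1 = graph 0 is the kernel of M: the line <x> when x <> 0, and pi_1 itself when x = 0.  So
   G_i consists of the q^3 - 1 planes with x <> 0.

   Since A is a Singer cycle, the matrices a + b A + c A^2 form a field of order q^3 whose nonzero
   elements are the powers of A; hence for 0 < k <= q^2 + q every s + t A^k with (s, t) <> 0 is
   invertible.  Two planes with parameters (i, x) <> (j, x'), j <= i, meet in the points whose Y is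
   orthogonal to every x cross w - x' cross A^(i-j) w.  These vectors span at least a plane
   (otherwise x cross x' would be a left eigenvector of A^(i-j), or 1 - mu A^(i-j) would be
   singular), so the two planes meet in at most a point.  In particular the planes are pairwise
   distinct, which gives the count. *)

section \<open>Dot and cross products in dimension three\<close>

definition dotp :: "('a::comm_semiring_1)^'n \<Rightarrow> 'a^'n \<Rightarrow> 'a" where
  "dotp x y = (\<Sum>i\<in>UNIV. x $ i * y $ i)"

lemma dotp_0_left [simp]: "dotp 0 x = 0"
  by (simp add: dotp_def)

lemma dotp_0_right [simp]: "dotp x 0 = 0"
  by (simp add: dotp_def)

lemma dotp_commute: "dotp x y = dotp y x"
  by (simp add: dotp_def mult.commute)

lemma dotp_diff_left: "dotp (x - y) z = dotp x z - dotp y (z :: ('a::comm_ring_1)^'n)"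
  by (simp add: dotp_def algebra_simps sum_subtractf)

lemma dotp_diff_right: "dotp x (y - z) = dotp x y - dotp x (z :: ('a::comm_ring_1)^'n)"
  by (simp add: dotp_def algebra_simps sum_subtractf)

lemma dotp_scale_left: "dotp (c *s x) y = c * dotp x y"
  by (simp add: dotp_def sum_distrib_left mult.assoc)

lemma dotp_scale_right: "dotp x (c *s y) = c * dotp x y"
  by (simp add: dotp_def sum_distrib_left mult.left_commute)

lemma dotp_matrix_vector: "dotp (M *v x) y = dotp x (transpose M *v y)"
  by (simp add: dotp_def matrix_vector_mult_def transpose_def sum_distrib_left
      sum_distrib_right mult_ac) (rule sum.swap)

lemma dotp_axis: "dotp x (axis i 1) = x $ i"
  by (simp add: dotp_def axis_def if_distrib[of "times _"] cong: if_cong)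

lemma dotp_eq_0_imp_eq_0: "(\<And>z. dotp x z = 0) \<Longrightarrow> x = 0"
  by (metis dotp_axis vec_eq_iff zero_index)

lemma dotp_3: "dotp (x::('a::comm_semiring_1)^3) y = x$1 * y$1 + x$2 * y$2 + x$3 * y$3"
  by (simp add: dotp_def sum_3)

lemma vec3_eq_iff: "(x::'a^3) = y \<longleftrightarrow> x$1 = y$1 \<and> x$2 = y$2 \<and> x$3 = y$3"
  by (simp add: vec_eq_iff forall_3)

lemma matrix_vector_mult_3:
  "((M::('a::comm_semiring_1)^3^3) *v x) $ i = M$i$1 * x$1 + M$i$2 * x$2 + M$i$3 * x$3"
  by (simp add: matrix_vector_mult_def sum_3)

lemma matrix_matrix_mult_3:
  "((M::('a::comm_semiring_1)^3^3) ** N) $ i $ j = M$i$1 * N$1$j + M$i$2 * N$2$j + M$i$3 * N$3$j"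
  by (simp add: matrix_matrix_mult_def sum_3)

definition cross :: "('a::comm_ring_1)^3 \<Rightarrow> 'a^3 \<Rightarrow> 'a^3" where
  "cross x y = vector [x$2 * y$3 - x$3 * y$2, x$3 * y$1 - x$1 * y$3, x$1 * y$2 - x$2 * y$1]"

lemma cross_nth [simp]:
  "cross x y $ 1 = x$2 * y$3 - x$3 * y$2"
  "cross x y $ 2 = x$3 * y$1 - x$1 * y$3"
  "cross x y $ 3 = x$1 * y$2 - x$2 * y$1"
  by (simp_all add: cross_def)

lemma cross_commute: "cross x y = - cross y x"
  by (simp add: vec3_eq_iff)

lemma dotp_cross_self_right: "dotp y (cross x y) = 0"
  by (simp add: dotp_3 algebra_simps)

lemma dotp_cross_cyclic: "dotp x (cross y z) = dotp z (cross x y)"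
  by (simp add: dotp_3 algebra_simps)

lemma cross_cross_left: "cross (cross x y) z = dotp x z *s y - dotp y z *s x"
  by (simp add: vec3_eq_iff dotp_3 algebra_simps)

lemma cross_eq_0_imp_parallel:
  fixes x y :: "('a::field)^3"
  assumes "x \<noteq> 0" "cross x y = 0"
  shows "\<exists>t. y = t *s x"
proof -
  obtain k where k: "x $ k \<noteq> 0" using assms(1) by (auto simp: vec_eq_iff)
  have "y = (y $ k / x $ k) *s x"
    using assms(2) k exhaust_3[of k] by (auto simp: vec3_eq_iff field_simps)
  then show ?thesis by blast
qed

lemma orthogonal_two_imp_parallel:
  fixes x y z :: "('a::field)^3"
  assumes "cross x y \<noteq> 0" "dotp z x = 0" "dotp z y = 0"
  shows "\<exists>t. z = t *s cross x y"
proof -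
  have "cross (cross x y) z = 0"
    using assms(2,3) by (simp add: cross_cross_left dotp_commute)
  then show ?thesis using cross_eq_0_imp_parallel assms(1) by blast
qed

lemma cross_cross_rank_two:
  fixes x :: "('a::field)^3"
  assumes "x \<noteq> 0"
  shows "\<exists>y z. cross (cross x y) (cross x z) \<noteq> 0"
proof -
  have cross_cross: "cross (cross x y) (cross x z) = dotp x (cross y z) *s x" for y z
    by (simp add: vec3_eq_iff dotp_3 algebra_simps)
  obtain k where k: "x $ k \<noteq> 0" using assms by (auto simp: vec_eq_iff)
  have "cross (axis (k + 1) 1) (axis (k + 2) 1) = axis k (1::'a)"
    using exhaust_3[of k] by (auto simp: vec3_eq_iff axis_def)
  then have "dotp x (cross (axis (k + 1) 1) (axis (k + 2) 1)) \<noteq> 0"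
    using k by (simp add: dotp_axis)
  then show ?thesis using assms by (metis cross_cross vector_mul_eq_0)
qed

definition skew :: "('a::comm_ring_1)^3 \<Rightarrow> 'a^3^3" where
  "skew x = vector [vector [0, - x$3, x$2], vector [x$3, 0, - x$1], vector [- x$2, x$1, 0]]"

lemma skew_mult_vector: "skew x *v y = cross x y"
  by (simp add: vec3_eq_iff matrix_vector_mult_3 skew_def algebra_simps)

lemma skew_inj: "skew x = skew y \<Longrightarrow> x = y"
  by (simp add: skew_def vec3_eq_iff)

lemma skew_0: "skew 0 = 0"
  by (simp add: skew_def vec3_eq_iff)

lemma alternating_imp_skew:
  fixes M :: "('a::comm_ring_1)^3^3"
  assumes "\<And>y. dotp y (M *v y) = 0"
  shows "\<exists>x. M = skew x"
proof -
  have "dotp (vector [a, b, c]) (M *v vector [a, b, c]) = 0" for a b c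
    using assms by blast
  from this[of 1 0 0] this[of 0 1 0] this[of 0 0 1] this[of 1 1 0] this[of 1 0 1] this[of 0 1 1]
  have "M$1$1 = 0" "M$2$2 = 0" "M$3$3 = 0"
    and "M$1$2 = - M$2$1" "M$1$3 = - M$3$1" "M$2$3 = - M$3$2"
    by (simp_all add: dotp_3 matrix_vector_mult_3 eq_neg_iff_add_eq_0 add.commute)
  then have "M = skew (vector [M$3$2, M$1$3, M$2$1])"
    by (simp add: skew_def vec3_eq_iff)
  then show ?thesis by blast
qed

section \<open>Matrix powers and the algebra generated by a matrix\<close>

lemma mat_mult_vector: "mat a *v x = a *s (x :: ('a::semiring_1)^'n)"
  by (simp add: vec_eq_iff matrix_vector_mult_def mat_def if_distrib[of "\<lambda>u. u * _"] cong: if_cong)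

lemma mat_mult_mat: "mat a ** mat b = (mat (a * b) :: ('a::semiring_1)^'n^'n)"
  by (simp add: vec_eq_iff matrix_matrix_mult_def mat_def if_distrib[of "\<lambda>u. u * _"] cong: if_cong)

lemma affine_matrix_vector_mult: "(mat s + mat t ** C) *v w = s *s w + t *s (C *v w)"
  by (simp add: matrix_vector_mult_add_rdistrib mat_mult_vector flip: matrix_vector_mul_assoc)

lemma matpow_add: "matpow A (m + n) = matpow A m ** matpow A n"
  by (induct m) (simp_all add: matrix_mul_assoc)

lemma matpow_mult: "matpow A (m * n) = matpow (matpow A m) n"
  by (induct n) (simp_all add: matpow_add)

lemma matpow_mat: "matpow (mat a) n = mat (a ^ n)"
  by (induct n) (simp_all add: mat_mult_mat)

lemma invertible_mat_1: "invertible (mat 1)"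
  unfolding invertible_def by (metis matrix_mul_lid)

lemma invertible_matpow: "invertible A \<Longrightarrow> invertible (matpow A n)"
  by (induct n) (simp_all add: invertible_mat_1 invertible_mult)

lemma invertible_nonzero: "invertible (M :: ('a::field)^'n^'n) \<Longrightarrow> M \<noteq> 0"
proof
  assume "invertible M" "M = 0"
  then have "(mat 1 :: 'a^'n^'n) = 0" by (metis invertible_def times0_left)
  then have "(mat 1 :: 'a^'n^'n) $ i $ i = 0" for i by simp
  then show False by (simp add: mat_def)
qed

lemma matrix_inv:
  assumes "invertible M"
  shows "M ** matrix_inv M = mat 1" "matrix_inv M ** M = mat 1"
  using someI_ex[OF assms[unfolded invertible_def]] by (simp_all add: matrix_inv_def)

text \<open>By Cayley--Hamilton (see \<open>mult_in_matrix_polys\<close>) this is the algebra of all polynomials in \<open>A\<close>.\<close>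

definition matrix_polys :: "('a::comm_ring_1)^3^3 \<Rightarrow> ('a^3^3) set" where
  "matrix_polys A = range (\<lambda>(a, b, c). mat a + mat b ** A + mat c ** (A ** A))"

lemma matrix_polysI: "mat a + mat b ** A + mat c ** (A ** A) \<in> matrix_polys A"
  unfolding matrix_polys_def by (rule image_eqI[where x = "(a, b, c)"]) simp_all

lemma matrix_polysE:
  assumes "M \<in> matrix_polys A"
  obtains a b c where "M = mat a + mat b ** A + mat c ** (A ** A)"
  using assms by (auto simp: matrix_polys_def)

lemma affine_in_matrix_polys:
  assumes "M \<in> matrix_polys A"
  shows "mat s + mat t ** M \<in> matrix_polys A"
proof -
  obtain a b c where "M = mat a + mat b ** A + mat c ** (A ** A)"
    using assms by (rule matrix_polysE)
  then have "mat s + mat t ** M = mat (s + t * a) + mat (t * b) ** A + mat (t * c) ** (A ** A)"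
    by (simp add: vec3_eq_iff matrix_matrix_mult_3 mat_def algebra_simps)
  then show ?thesis by (simp add: matrix_polysI)
qed

lemma zero_in_matrix_polys: "0 \<in> matrix_polys A"
  using matrix_polysI[where a = 0 and b = 0 and c = 0] by (simp add: mat_mult_mat)

text \<open>Cayley--Hamilton: \<open>A\<^sup>3 = tr A \<cdot> A\<^sup>2 - s\<^sub>2 A + det A\<close>, with \<open>s\<^sub>2\<close> the sum of the
  principal \<open>2\<times>2\<close> minors.\<close>

lemma mult_in_matrix_polys:
  assumes "M \<in> matrix_polys A"
  shows "A ** M \<in> matrix_polys A"
proof -
  obtain a b c where M: "M = mat a + mat b ** A + mat c ** (A ** A)"
    using assms by (rule matrix_polysE)
  define s2 where "s2 = A$1$1 * A$2$2 - A$1$2 * A$2$1 + A$1$1 * A$3$3 - A$1$3 * A$3$1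
    + A$2$2 * A$3$3 - A$2$3 * A$3$2"
  have "A ** M = mat (c * det A) + mat (a - c * s2) ** A + mat (b + c * trace A) ** (A ** A)"
    by (simp add: M s2_def det_3 trace_def sum_3 vec3_eq_iff matrix_matrix_mult_3 mat_def algebra_simps)
  then show ?thesis by (simp add: matrix_polysI)
qed

lemma matpow_in_matrix_polys: "matpow A n \<in> matrix_polys A"
proof (induct n)
  case 0
  then show ?case using matrix_polysI[where a = 1 and b = 0 and c = 0] by (simp add: mat_mult_mat)
next
  case (Suc n)
  then show ?case by (simp add: mult_in_matrix_polys)
qed

lemma card_matrix_polys_le:
  "card (matrix_polys (A :: ('a::{comm_ring_1,finite})^3^3)) \<le> CARD('a) ^ 3"
proof -
  have "card (matrix_polys A) \<le> card (UNIV :: ('a \<times> 'a \<times> 'a) set)"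
    unfolding matrix_polys_def by (rule card_image_le) simp
  then show ?thesis by (simp add: power3_eq_cube)
qed

section \<open>Singer cycles\<close>

lemma two_le_card_field: "2 \<le> CARD('a::{field,finite})"
proof -
  have "card {0::'a, 1} \<le> CARD('a)" by (rule card_mono) auto
  then show ?thesis by simp
qed

lemma power_card_minus_one:
  fixes x :: "'a::{field,finite}"
  assumes "x \<noteq> 0"
  shows "x ^ (CARD('a) - 1) = 1"
proof -
  let ?U = "UNIV - {0::'a}"
  have "bij_betw ((*) x) ?U ?U"
    using assms by (intro bij_betwI[where g = "\<lambda>y. y / x"]) auto
  then have "(\<Prod>y\<in>?U. x * y) = (\<Prod>y\<in>?U. y)"
    using prod.reindex_bij_betw[of "(*) x" ?U ?U "\<lambda>y. y"] by simp
  moreover have "(\<Prod>y\<in>?U. x * y) = x ^ card ?U * (\<Prod>y\<in>?U. y)"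
    by (simp add: prod.distrib)
  moreover have "(\<Prod>y\<in>?U. y) \<noteq> 0" by simp
  moreover have "card ?U = CARD('a) - 1" by (simp add: card_Diff_subset)
  ultimately show ?thesis by (metis mult_cancel_right1)
qed

lemma cube_minus_one_factor: "(q::nat)^3 - 1 = (q - 1) * (q^2 + q + 1)"
  by (cases q) (simp_all add: algebra_simps power2_eq_square power3_eq_cube)

context
  fixes A :: "('a::{field,finite})^3^3"
  assumes singer: "singer_cycle A"
begin

lemma singer_invertible: "invertible A"
  using singer by (simp add: singer_cycle_def)

lemma singer_order: "matpow A (CARD('a)^3 - 1) = mat 1"
  using singer by (simp add: singer_cycle_def)

lemma matpow_eq_1_imp_dvd:
  assumes "matpow A n = mat 1"
  shows "(CARD('a)^3 - 1) dvd n"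
proof (rule ccontr)
  let ?N = "CARD('a)^3 - 1"
  assume "\<not> ?N dvd n"
  have "(2::nat)^3 \<le> CARD('a)^3"
    using two_le_card_field[where 'a = 'a] by (rule power_mono) simp
  with \<open>\<not> ?N dvd n\<close> have "0 < n mod ?N" "n mod ?N < ?N"
    by (simp_all add: mod_greater_zero_iff_not_dvd)
  have "matpow A n = matpow A (?N * (n div ?N) + n mod ?N)" by simp
  also have "\<dots> = matpow (matpow A ?N) (n div ?N) ** matpow A (n mod ?N)"
    by (simp only: matpow_add matpow_mult)
  also have "\<dots> = matpow A (n mod ?N)"
    by (simp only: singer_order matpow_mat power_one matrix_mul_lid)
  finally have "matpow A (n mod ?N) = mat 1"
    using assms by simp
  then show False
    using singer \<open>0 < n mod ?N\<close> \<open>n mod ?N < ?N\<close> unfolding singer_cycle_def by blast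
qed

lemma inj_on_matpow: "inj_on (matpow A) {..<CARD('a)^3 - 1}"
proof (rule linorder_inj_onI')
  fix m n assume mn: "m \<in> {..<CARD('a)^3 - 1}" "n \<in> {..<CARD('a)^3 - 1}" "m < n"
  show "matpow A m \<noteq> matpow A n"
  proof
    assume eq: "matpow A m = matpow A n"
    obtain X where X: "X ** matpow A m = mat 1"
      using invertible_matpow[OF singer_invertible] by (auto simp: invertible_def)
    have "matpow A (n - m) = (X ** matpow A m) ** matpow A (n - m)" by (simp add: X)
    also have "\<dots> = X ** matpow A m" using mn(3) eq
      by (metis matpow_add matrix_mul_assoc le_add_diff_inverse less_imp_le)
    finally have "matpow A (n - m) = mat 1" using X by simp
    then have "(CARD('a)^3 - 1) dvd (n - m)" by (rule matpow_eq_1_imp_dvd)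
    then show False using mn by (simp add: nat_dvd_not_less)
  qed
qed

text \<open>There are at most \<open>q\<^sup>3\<close> matrices \<open>a + b A + c A\<^sup>2\<close>, and \<open>0\<close> together with the
  \<open>q\<^sup>3 - 1\<close> distinct powers of \<open>A\<close> already account for \<open>q\<^sup>3\<close> of them.\<close>

lemma matrix_polys_singer: "matrix_polys A = insert 0 (matpow A ` {..<CARD('a)^3 - 1})"
proof (rule card_seteq[symmetric])
  show "insert 0 (matpow A ` {..<CARD('a)^3 - 1}) \<subseteq> matrix_polys A"
    by (auto simp: zero_in_matrix_polys matpow_in_matrix_polys)
  have "0 \<notin> matpow A ` {..<CARD('a)^3 - 1}"
    using invertible_nonzero[OF invertible_matpow[OF singer_invertible]] by auto
  then have "card (insert 0 (matpow A ` {..<CARD('a)^3 - 1})) = CARD('a)^3"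
    using inj_on_matpow two_le_card_field[where 'a = 'a] by (simp add: card_image)
  then show "card (matrix_polys A) \<le> card (insert 0 (matpow A ` {..<CARD('a)^3 - 1}))"
    by (simp add: card_matrix_polys_le)
qed simp

lemma invertible_matrix_polys: "M \<in> matrix_polys A \<Longrightarrow> M \<noteq> 0 \<Longrightarrow> invertible M"
  using matrix_polys_singer invertible_matpow[OF singer_invertible] by auto

lemma matpow_not_scalar:
  assumes "0 < k" "k \<le> CARD('a)^2 + CARD('a)"
  shows "matpow A k \<noteq> mat t"
proof
  let ?q = "CARD('a)"
  assume k: "matpow A k = mat t"
  then have "t \<noteq> 0"
    using invertible_nonzero[OF invertible_matpow[OF singer_invertible]] by auto
  then have "matpow A (k * (?q - 1)) = mat 1"
    using power_card_minus_one[of t] by (simp add: matpow_mult k matpow_mat)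
  then have "(?q - 1) * (?q^2 + ?q + 1) dvd (?q - 1) * k"
    using cube_minus_one_factor[of ?q] by (metis matpow_eq_1_imp_dvd mult.commute)
  then have "?q^2 + ?q + 1 dvd k"
    using two_le_card_field[where 'a = 'a] by (subst (asm) nat_mult_dvd_cancel1) auto
  then show False using assms by (simp add: nat_dvd_not_less)
qed

lemma surj_affine_matpow:
  assumes "0 < k" "k \<le> CARD('a)^2 + CARD('a)" "s \<noteq> 0 \<or> t \<noteq> 0"
  shows "surj ((*v) (mat s + mat t ** matpow A k))"
proof -
  have "mat s + mat t ** matpow A k \<noteq> 0"
  proof
    assume eq: "mat s + mat t ** matpow A k = 0"
    have kill: "s *s y + t *s (matpow A k *v y) = 0" for y
      using arg_cong[OF eq, of "\<lambda>M. M *v y"] by (simp only: affine_matrix_vector_mult) simp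
    from kill[of "vector [1, 0, 0]"] assms(3) have t: "t \<noteq> 0"
      by (auto simp: vec3_eq_iff)
    have "matpow A k *v y = mat (- s / t) *v y" for y
    proof -
      have "t *s (matpow A k *v y) = - (s *s y)"
        using kill[of y] by (simp add: add_eq_0_iff)
      then have "(1 / t) *s (t *s (matpow A k *v y)) = (- s / t) *s y"
        by simp
      then show ?thesis using t by (simp add: mat_mult_vector)
    qed
    then have "matpow A k = mat (- s / t)"
      by (simp add: matrix_eq)
    then show False using matpow_not_scalar assms(1,2) by blast
  qed
  then have "invertible (mat s + mat t ** matpow A k)"
    by (simp add: invertible_matrix_polys affine_in_matrix_polys matpow_in_matrix_polys)
  then show ?thesis by (simp add: invertible_eq_bij bij_is_surj)
qed

end

text \<open>If \<open>x \<times> y = 0\<close> the vectors below are \<open>x \<times> E w\<close> with \<open>E = 1 - \<mu> C\<close> invertible;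
  otherwise their collinearity would make \<open>x \<times> y\<close> a left eigenvector of \<open>C\<close>.\<close>

lemma cross_twisted_rank_two:
  fixes x y :: "('a::field)^3" and C :: "'a^3^3"
  assumes "x \<noteq> 0" "y \<noteq> 0"
    and surj: "\<And>s t. s \<noteq> 0 \<or> t \<noteq> 0 \<Longrightarrow> surj ((*v) (mat s + mat t ** C))"
  shows "\<exists>w1 w2. cross (cross x w1 - cross y (C *v w1)) (cross x w2 - cross y (C *v w2)) \<noteq> 0"
proof (rule ccontr)
  define f where "f w = cross x w - cross y (C *v w)" for w
  assume "\<not> ?thesis"
  then have collinear: "cross (f w1) (f w2) = 0" for w1 w2 by (simp add: f_def)
  show False
  proof (cases "cross x y = 0")
    case True
    then obtain \<mu> where \<mu>: "y = \<mu> *s x" using cross_eq_0_imp_parallel assms(1) by blast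
    let ?E = "mat 1 + mat (- \<mu>) ** C"
    have "f w = cross x (?E *v w)" for w
      unfolding affine_matrix_vector_mult by (simp add: f_def \<mu> vec3_eq_iff algebra_simps)
    moreover obtain v1 v2 where "cross (cross x v1) (cross x v2) \<noteq> 0"
      using cross_cross_rank_two assms(1) by blast
    moreover obtain w1 w2 where "v1 = ?E *v w1" "v2 = ?E *v w2"
      using surj[of 1 "- \<mu>"] by (metis surjD zero_neq_one)
    ultimately show False using collinear by metis
  next
    case False
    let ?g = "cross x y"
    have fy: "dotp y (f w) = - dotp w ?g" for w
      by (simp add: f_def dotp_3 algebra_simps)
    have fx: "dotp x (f w) = - dotp (C *v w) ?g" for w
      by (simp add: f_def dotp_3 algebra_simps)
    obtain w0 where w0: "dotp w0 ?g \<noteq> 0"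
      using False dotp_eq_0_imp_eq_0 dotp_commute by metis
    then have "f w0 \<noteq> 0" using fy[of w0] by auto
    define \<kappa> where "\<kappa> = dotp (C *v w0) ?g / dotp w0 ?g"
    have "dotp ((mat (- \<kappa>) + mat 1 ** C) *v w) ?g = 0" for w
    proof -
      obtain t where "f w = t *s f w0"
        using cross_eq_0_imp_parallel[OF \<open>f w0 \<noteq> 0\<close> collinear[of w0 w]] by blast
      then have "dotp w ?g = t * dotp w0 ?g" "dotp (C *v w) ?g = t * dotp (C *v w0) ?g"
        using fy[of w] fy[of w0] fx[of w] fx[of w0] by (simp_all add: dotp_scale_right)
      then show ?thesis
        using w0 unfolding affine_matrix_vector_mult by (simp add: dotp_diff_left dotp_scale_left \<kappa>_def)
    qed
    then have "dotp z ?g = 0" for z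
      using surj[of "- \<kappa>" 1] by (metis surjD zero_neq_one)
    then show False using False dotp_eq_0_imp_eq_0 dotp_commute by metis
  qed
qed

section \<open>Planes of \<open>PG(5, q)\<close> as graphs of matrices\<close>

lemma exhaust_6:
  fixes k :: 6
  shows "k = 0 \<or> k = 1 \<or> k = 2 \<or> k = 3 \<or> k = 4 \<or> k = 5"
proof (induct k)
  case (of_int z)
  then have "z = 0 \<or> z = 1 \<or> z = 2 \<or> z = 3 \<or> z = 4 \<or> z = 5" by fastforce
  then show ?case by auto
qed

definition pair6 :: "('a::zero)^3 \<Rightarrow> 'a^3 \<Rightarrow> 'a^6" where
  "pair6 x y = (\<chi> k. if k = idxX 1 then x$1 else if k = idxX 2 then x$2 else if k = idxX 3 then x$3
     else if k = idxY 1 then y$1 else if k = idxY 2 then y$2 else y$3)"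

lemma vecX_pair6 [simp]: "vecX (pair6 x y) = x"
  by (simp add: vec3_eq_iff vecX_def pair6_def idxX_def idxY_def)

lemma vecY_pair6 [simp]: "vecY (pair6 x y) = y"
  by (simp add: vec3_eq_iff vecY_def pair6_def idxX_def idxY_def)

lemma pair6_vecX_vecY: "pair6 (vecX v) (vecY v) = v"
proof -
  have "pair6 (vecX v) (vecY v) $ k = v $ k" for k
    using exhaust_6[of k] by (auto simp: pair6_def vecX_def vecY_def idxX_def idxY_def)
  then show ?thesis by (simp add: vec_eq_iff)
qed

lemma vec6_eqI: "vecX v = vecX w \<Longrightarrow> vecY v = vecY w \<Longrightarrow> v = (w :: ('a::zero)^6)"
  by (metis pair6_vecX_vecY)

lemma vecX_0 [simp]: "vecX 0 = 0" by (simp add: vec_eq_iff vecX_def)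
lemma vecY_0 [simp]: "vecY 0 = 0" by (simp add: vec_eq_iff vecY_def)
lemma vecX_add: "vecX (v + w) = vecX v + vecX w" by (simp add: vec_eq_iff vecX_def)
lemma vecY_add: "vecY (v + w) = vecY v + vecY w" by (simp add: vec_eq_iff vecY_def)
lemma vecY_diff: "vecY (v - w) = vecY v - vecY w" by (simp add: vec_eq_iff vecY_def)
lemma vecX_scale: "vecX (c *s v) = c *s vecX v" by (simp add: vec_eq_iff vecX_def)
lemma vecY_scale: "vecY (c *s v) = c *s vecY v" by (simp add: vec_eq_iff vecY_def)

lemma linear_vecY: "Vector_Spaces.linear (*s) (*s) (vecY :: ('a::field)^6 \<Rightarrow> 'a^3)"
  by (simp add: Vector_Spaces.linear_iff vec.vector_space_axioms vecY_add vecY_scale)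

lemma dim_le_1_if_subset_line: "S \<subseteq> range (\<lambda>t. t *s x) \<Longrightarrow> vec.dim S \<le> 1"
  using vec.dim_le_card[of S "{x}"] by (simp add: vec.span_singleton)

lemma dim_line: "x \<noteq> 0 \<Longrightarrow> vec.dim (range (\<lambda>t. t *s (x :: ('a::field)^'n))) = 1"
  by (simp flip: vec.span_singleton add: vec.dim_span)

definition graph :: "('a::field)^3^3 \<Rightarrow> ('a^6) set" where
  "graph M = {v. vecX v = M *v vecY v}"

lemma linear_graph_param: "Vector_Spaces.linear (*s) (*s) (\<lambda>y. pair6 (M *v y) (y :: ('a::field)^3))"
  by (auto simp: Vector_Spaces.linear_iff vec.vector_space_axioms vecX_add vecY_add
      vecX_scale vecY_scale matrix_vector_right_distrib vector_scalar_commute intro!: vec6_eqI)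

lemma graph_eq_image: "graph M = (\<lambda>y. pair6 (M *v y) y) ` UNIV"
  unfolding graph_def by (auto simp: image_iff) (metis pair6_vecX_vecY)

lemma dim_graph: "vec.dim (graph M) = 3"
proof -
  have "vec.dim (graph M) = vec.dim (UNIV :: ('a^3) set)"
    unfolding graph_eq_image
    by (rule vec.dim_image_eq[OF linear_graph_param], rule inj_onI) (metis vecY_pair6)
  then show ?thesis by (simp add: vec_dim_card card_cart_basis)
qed

lemma pg_plane_graph: "pg_plane (graph M)"
  unfolding pg_plane_def graph_eq_image
  using vec.linear_subspace_image[OF linear_graph_param vec.subspace_UNIV] dim_graph[of M]
  by (simp add: graph_eq_image)

lemma pi1_eq_graph: "pi1 = graph 0"
  by (simp add: pi1_def graph_def)

lemma graph_inter_pi2: "graph M \<inter> pi2 = {0}"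
proof (intro equalityI subsetI)
  fix v assume "v \<in> graph M \<inter> pi2"
  then show "v \<in> {0}" by (auto simp: graph_def pi2_def intro!: vec6_eqI)
qed (simp add: graph_def pi2_def)

lemma graph_inter_graph: "graph M \<inter> graph M' = (\<lambda>y. pair6 (M *v y) y) ` {y. M *v y = M' *v y}"
proof (intro equalityI subsetI)
  fix v assume "v \<in> graph M \<inter> graph M'"
  then have "v = pair6 (M *v vecY v) (vecY v)" "M *v vecY v = M' *v vecY v"
    by (auto simp: graph_def intro!: vec6_eqI)
  then show "v \<in> (\<lambda>y. pair6 (M *v y) y) ` {y. M *v y = M' *v y}" by blast
qed (auto simp: graph_def)

lemma dim_graph_inter_graph: "vec.dim (graph M \<inter> graph M') = vec.dim {y. M *v y = M' *v y}"
  unfolding graph_inter_graph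
  by (rule vec.dim_image_eq[OF linear_graph_param], rule inj_onI) (metis vecY_pair6)

lemma vecY_image_eq_UNIV:
  assumes "vec.subspace W" "vec.dim W = 3" "W \<inter> pi2 = {0}"
  shows "vecY ` W = (UNIV :: (('a::field)^3) set)"
proof -
  have "inj_on vecY (vec.span W)"
  proof (rule inj_onI)
    fix u v assume uv: "u \<in> vec.span W" "v \<in> vec.span W" "vecY u = vecY v"
    moreover have "vec.span W = W" using assms(1) by (simp add: vec.span_eq_iff)
    ultimately have "u - v \<in> W \<inter> pi2"
      using assms(1) by (simp add: vec.subspace_diff pi2_def vecY_diff)
    then show "u = v" using assms(3) by simp
  qed
  then have "vec.dim (vecY ` W) = 3"
    using assms(2) by (simp add: vec.dim_image_eq[OF linear_vecY])
  then have "vec.span (vecY ` W) = UNIV"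
    using vec.dim_eq_full[of "vecY ` W"] by (simp add: vec.dimension_def card_cart_basis)
  moreover have "vec.subspace (vecY ` W)"
    by (rule vec.linear_subspace_image[OF linear_vecY assms(1)])
  ultimately show ?thesis by (metis vec.span_eq_iff)
qed

lemma plane_disjoint_pi2_eq_graph:
  assumes W: "vec.subspace W" "vec.dim W = 3" "W \<inter> pi2 = {0}"
  shows "\<exists>M. W = graph M"
proof -
  define w where "w j = inv_into W vecY (axis j 1)" for j
  have w: "w j \<in> W" "vecY (w j) = axis j 1" for j
    unfolding w_def using vecY_image_eq_UNIV[OF W] by (simp_all add: inv_into_into f_inv_into_f)
  define M where "M = (\<chi> i j. vecX (w j) $ i)"
  have "graph M \<subseteq> W"
  proof
    fix v assume "v \<in> graph M"
    let ?y = "vecY v"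
    let ?u = "?y $ 1 *s w 1 + ?y $ 2 *s w 2 + ?y $ 3 *s w 3"
    have "vecY ?u = ?y"
      by (simp add: w(2) vecY_add vecY_scale vec3_eq_iff axis_def)
    moreover have "vecX ?u = vecX v"
      using \<open>v \<in> graph M\<close>
      by (simp add: graph_def M_def vecX_add vecX_scale vec3_eq_iff matrix_vector_mult_3 mult.commute)
    moreover have "?u \<in> W"
      using W(1) w(1) by (intro vec.subspace_add vec.subspace_scale)
    ultimately show "v \<in> W" using vec6_eqI by metis
  qed
  then have "graph M = W"
    using W pg_plane_graph[of M] by (intro vec.subspace_dim_equal) (simp_all add: pg_plane_def)
  then show ?thesis by blast
qed

section \<open>The planes of the quadrics \<open>Q\<^sub>i\<close>\<close>

lemma quadform_eq_dotp: "quadform A i v = dotp (vecX v) (matpow A i *v vecY v)"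
  by (simp add: quadform_def dotp_def)

definition plane_matrix :: "('a::field)^3^3 \<Rightarrow> nat \<Rightarrow> 'a^3 \<Rightarrow> 'a^3^3" where
  "plane_matrix A i x = transpose (skew x ** matrix_inv (matpow A i))"

lemma plane_matrix_0: "plane_matrix A i 0 = 0"
  by (simp add: plane_matrix_def skew_0 vec_eq_iff transpose_def)

lemma plane_matrix_mult_self: "plane_matrix A i x *v x = 0"
proof -
  have "x v* skew x = 0"
    by (simp add: vec3_eq_iff vector_matrix_mult_def sum_3 skew_def algebra_simps)
  then show ?thesis
    by (simp add: plane_matrix_def vector_matrix_mul_assoc[symmetric])
qed

context
  fixes A :: "('a::field)^3^3"
  assumes invertible: "invertible A"
begin

lemma transpose_plane_matrix: "transpose (plane_matrix A i x) ** matpow A i = skew x"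
  using matrix_inv(2)[OF invertible_matpow[OF invertible]]
  by (simp add: plane_matrix_def matrix_mul_assoc[symmetric])

lemma dotp_plane_matrix: "dotp (plane_matrix A i x *v y) (matpow A i *v w) = dotp y (cross x w)"
  by (simp add: dotp_matrix_vector matrix_vector_mul_assoc transpose_plane_matrix skew_mult_vector)

lemma alternating_iff_plane_matrix:
  "(\<forall>y. dotp (M *v y) (matpow A i *v y) = 0) \<longleftrightarrow> (\<exists>x. M = plane_matrix A i x)"
proof
  assume "\<forall>y. dotp (M *v y) (matpow A i *v y) = 0"
  then have "dotp y ((transpose M ** matpow A i) *v y) = 0" for y
    by (simp add: dotp_matrix_vector matrix_vector_mul_assoc[symmetric])
  then obtain x where x: "transpose M ** matpow A i = skew x"
    using alternating_imp_skew by blast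
  have "transpose M = transpose M ** (matpow A i ** matrix_inv (matpow A i))"
    using matrix_inv(1)[OF invertible_matpow[OF invertible]] by simp
  also have "\<dots> = skew x ** matrix_inv (matpow A i)"
    by (simp add: matrix_mul_assoc x)
  finally show "\<exists>x. M = plane_matrix A i x"
    unfolding plane_matrix_def by (metis transpose_transpose)
qed (auto simp: dotp_plane_matrix dotp_cross_self_right)

lemma plane_matrix_kernel:
  assumes "x \<noteq> 0"
  shows "{y. plane_matrix A i x *v y = 0} = range (\<lambda>t. t *s x)"
proof (intro equalityI subsetI)
  fix y assume "y \<in> {y. plane_matrix A i x *v y = 0}"
  then have "dotp w (cross y x) = 0" for w
    using dotp_plane_matrix[of i x y w] by (simp add: dotp_commute dotp_cross_cyclic)
  then have "cross x y = 0"
    by (metis dotp_eq_0_imp_eq_0 dotp_commute cross_commute neg_equal_0_iff_equal)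
  then show "y \<in> range (\<lambda>t. t *s x)"
    using cross_eq_0_imp_parallel[OF assms] by blast
qed (auto simp: vector_scalar_commute plane_matrix_mult_self)

lemma graph_plane_matrix_in_G:
  assumes "x \<noteq> 0"
  shows "graph (plane_matrix A i x) \<in> G A i"
proof -
  let ?W = "graph (plane_matrix A i x)"
  have "vec.dim (?W \<inter> pi1) = vec.dim {y. plane_matrix A i x *v y = 0 *v y}"
    by (simp only: pi1_eq_graph dim_graph_inter_graph)
  also have "\<dots> = 1"
    using plane_matrix_kernel[OF assms] dim_line[OF assms] by simp
  finally have meet_pi1: "vec.dim (?W \<inter> pi1) = 1" .
  moreover have "quadform A i v = 0" if "v \<in> ?W" for v
    using that by (simp add: graph_def quadform_eq_dotp dotp_plane_matrix dotp_cross_self_right)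
  moreover have "?W \<noteq> pi1"
  proof
    assume "?W = pi1"
    then have "vec.dim (?W \<inter> pi1) = 3"
      using dim_graph[of 0] by (simp add: pi1_eq_graph)
    then show False using meet_pi1 by simp
  qed
  ultimately show ?thesis
    unfolding G_def quadric_planes_def same_class_def by (simp add: pg_plane_graph graph_inter_pi2)
qed

lemma G_eq_image: "G A i = (\<lambda>x. graph (plane_matrix A i x)) ` (UNIV - {0})"
proof (intro equalityI subsetI)
  fix W assume W: "W \<in> G A i"
  then have "vec.subspace W" "vec.dim W = 3" "W \<inter> pi2 = {0}"
    by (simp_all add: G_def quadric_planes_def pg_plane_def)
  then obtain M where M: "W = graph M"
    using plane_disjoint_pi2_eq_graph by blast
  have "dotp (M *v y) (matpow A i *v y) = 0" for y
  proof -
    have "pair6 (M *v y) y \<in> W" by (simp add: M graph_def)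
    then have "quadform A i (pair6 (M *v y) y) = 0"
      using W by (simp add: G_def quadric_planes_def)
    then show ?thesis by (simp add: quadform_eq_dotp)
  qed
  then obtain x where x: "M = plane_matrix A i x"
    using alternating_iff_plane_matrix by blast
  moreover have "x \<noteq> 0"
  proof
    assume "x = 0"
    then have "W = pi1" by (simp add: M x pi1_eq_graph plane_matrix_0)
    then show False using W by (simp add: G_def)
  qed
  ultimately show "W \<in> (\<lambda>x. graph (plane_matrix A i x)) ` (UNIV - {0})"
    using M by blast
qed (auto intro: graph_plane_matrix_in_G)

end

section \<open>Intersections of the planes\<close>

context
  fixes A :: "('a::{field,finite})^3^3"
  assumes singer: "singer_cycle A"
begin

lemma plane_matrix_agree_imp_orthogonal:
  assumes "j \<le> i" "plane_matrix A i x *v y = plane_matrix A j x' *v y"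
  shows "dotp y (cross x w - cross x' (matpow A (i - j) *v w)) = 0"
proof -
  have "matpow A i = matpow A j ** matpow A (i - j)"
    using assms(1) by (metis matpow_add le_add_diff_inverse)
  then show ?thesis
    using dotp_plane_matrix[OF singer_invertible[OF singer], of i x y w]
      dotp_plane_matrix[OF singer_invertible[OF singer], of j x' y "matpow A (i - j) *v w"] assms(2)
    by (simp add: dotp_diff_right matrix_vector_mul_assoc)
qed

lemma plane_matrix_agree_subset_line:
  assumes "j \<le> i" "i \<le> CARD('a)^2 + CARD('a)" "x \<noteq> 0" "x' \<noteq> 0" "(i, x) \<noteq> (j, x')"
  shows "\<exists>g. {y. plane_matrix A i x *v y = plane_matrix A j x' *v y} \<subseteq> range (\<lambda>t. t *s g)"
proof -
  let ?f = "\<lambda>w. cross x w - cross x' (matpow A (i - j) *v w)"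
  obtain w1 w2 where w: "cross (?f w1) (?f w2) \<noteq> 0"
  proof (cases "i = j")
    case True
    then have "?f w = cross (x - x') w" for w by (simp add: vec3_eq_iff algebra_simps)
    moreover have "x - x' \<noteq> 0" using True assms(5) by simp
    ultimately show ?thesis using that cross_cross_rank_two by metis
  next
    case False
    then have "0 < i - j" "i - j \<le> CARD('a)^2 + CARD('a)" using assms(1,2) by auto
    then show ?thesis
      using that cross_twisted_rank_two[OF assms(3,4) surj_affine_matpow[OF singer]] by blast
  qed
  have "y \<in> range (\<lambda>t. t *s cross (?f w1) (?f w2))"
    if "plane_matrix A i x *v y = plane_matrix A j x' *v y" for y
    using orthogonal_two_imp_parallel[OF w] plane_matrix_agree_imp_orthogonal[OF assms(1) that]
    by blast
  then show ?thesis by blast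
qed

lemma dim_inter_graph_plane_matrix:
  assumes "i \<le> CARD('a)^2 + CARD('a)" "j \<le> CARD('a)^2 + CARD('a)" "x \<noteq> 0" "x' \<noteq> 0"
    and "(i, x) \<noteq> (j, x')"
  shows "vec.dim (graph (plane_matrix A i x) \<inter> graph (plane_matrix A j x')) \<le> 1"
proof -
  have "vec.dim (graph (plane_matrix A i x) \<inter> graph (plane_matrix A j x')) \<le> 1"
    if "j \<le> i" "i \<le> CARD('a)^2 + CARD('a)" "x \<noteq> 0" "x' \<noteq> 0" "(i, x) \<noteq> (j, x')" for i j x x'
    using plane_matrix_agree_subset_line[OF that] dim_le_1_if_subset_line
    by (metis dim_graph_inter_graph)
  then show ?thesis
    using assms by (metis Int_commute nat_le_linear)
qed

end

theorem theorem4p7: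
  fixes A :: "('a::{field,finite})^3^3"
  assumes "singer_cycle A"
  defines "q \<equiv> CARD('a)"
  defines "C \<equiv> (\<Union>i\<in>{0..q^2+q}. G A i)"
  shows "(\<forall>W\<in>C. pg_plane W)
       \<and> card C = (q^3 - 1) * (q^2 + q + 1)
       \<and> (\<forall>U\<in>C. \<forall>W\<in>C. U \<noteq> W \<longrightarrow> vec.dim (U \<inter> W) \<le> 1)"
proof -
  let ?P = "\<lambda>d. graph (plane_matrix A (fst d) (snd d))"
  let ?D = "{0..q^2 + q} \<times> (UNIV - {0 :: 'a^3})"
  have C: "C = ?P ` ?D"
    unfolding C_def G_eq_image[OF singer_invertible[OF assms(1)]] by force
  have meet: "vec.dim (?P d \<inter> ?P e) \<le> 1" if "d \<in> ?D" "e \<in> ?D" "d \<noteq> e" for d e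
  proof -
    have "fst d \<le> q^2 + q" "fst e \<le> q^2 + q" "snd d \<noteq> 0" "snd e \<noteq> 0"
      "(fst d, snd d) \<noteq> (fst e, snd e)"
      using that by auto
    then show ?thesis
      using dim_inter_graph_plane_matrix[OF assms(1)] unfolding q_def by blast
  qed
  have "inj_on ?P ?D"
  proof (rule inj_onI, rule ccontr)
    fix d e assume de: "d \<in> ?D" "e \<in> ?D" "?P d = ?P e" "d \<noteq> e"
    then show False using meet[OF de(1,2,4)] by (simp add: dim_graph)
  qed
  then have "card C = card ?D" by (simp add: C card_image)
  also have "\<dots> = (q^3 - 1) * (q^2 + q + 1)"
    by (simp add: card_cartesian_product card_Diff_singleton q_def mult.commute)
  finally have "card C = (q^3 - 1) * (q^2 + q + 1)" .
  moreover have "\<forall>W\<in>C. pg_plane W"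
    by (simp add: C pg_plane_graph)
  moreover have "vec.dim (U \<inter> W) \<le> 1" if "U \<in> C" "W \<in> C" "U \<noteq> W" for U W
    using that meet unfolding C by blast
  ultimately show ?thesis by blast
qed

end
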